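(* Let $t,t'\in B_n$ with $t\neq t'$ and let $G$ be a digraph such that $\mathbb{A}(G)$ satisfies $t\approx t'$. Let $K$ be a nontrivial strongly connected component of $G$ that is a whirl, and let $u,w$ be vertices in the same block of $K$. If $u\to v_0\to v_1\to\dots\to v_{Z_{t,t'}}$ is a walk in $G$, then $(w,v_0)$ is an edge of $G$. Consequently, $Z_G<Z_{t,t'}$.
   Context: Digraphs $G=(V,E)$ have $E\subseteq V\times V$, loops allowed, possibly infinite. $\mathbb{A}(G)$ is the groupoid on $V\cup\{\infty\}$ with $xy=x$ if $x,y\in V$, $(x,y)\in E$, and $xy=\infty$ otherwise. $B_n$: binary terms with $x_1,\dots,x_n$ each occurring once in this order; $G(t)$: rooted tree defined by $G(x_i)$ a single vertex and $G(t_1t_2)=G(t_1)\cup G(t_2)$ plus an edge from the leftmost variable of $t_1$ to that of $t_2$; root $x_1$. $T_x$ is the rooted induced subtree of $x$ and its descendants, $h$ is height. With $T=G(t)$, $T'=G(t')$: $Z_{t,t'}$ is the smallest $m\ge0$ such that some $x$ has $T_x=T'_x$, $h(T_x)=m$, and different parents in $T$ and $T'$. A strongly connected component (SCC) is trivial if it is a single vertex without a loop, nontrivial otherwise. For $m\ge1$, an $m$-whirl is a digraph whose vertex set is partitioned into nonempty blocks $B_0,\dots,B_{m-1}$ (indices mod $m$) with edge set exactly $\bigcup_iB_i\times B_{i+1}$. $Z_G$ is the largest $m\ge0$ such that some SCC that is a whirl has a block containing vertices $u,w$ with a walk $u\to v_0\to\dots\to v_m$ and $(w,v_0)\notin E$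 ($\infty$ if unbounded, $-\infty$ if no such $m$). *)

theory Defs
  imports Main "HOL-Library.Extended_Real"
begin

datatype bterm = Var nat | App bterm bterm

fun leaves :: "bterm \<Rightarrow> nat list" where
  "leaves (Var i) = [i]"
| "leaves (App a b) = leaves a @ leaves b"

definition Bn :: "nat \<Rightarrow> bterm set" where
  "Bn n = {t. leaves t = [1..<Suc n]}"

section \<open>The groupoid A(G); elements are 'v option, None standing for infinity\<close>

definition gmul :: "('v \<times> 'v) set \<Rightarrow> 'v option \<Rightarrow> 'v option \<Rightarrow> 'v option" where
  "gmul E a b = (case (a, b) of (Some x, Some y) \<Rightarrow> (if (x, y) \<in> E then Some x else None)
                               | _ \<Rightarrow> None)"

fun eval :: "('v \<times> 'v) set \<Rightarrow> (nat \<Rightarrow> 'v option) \<Rightarrow> bterm \<Rightarrow> 'v option" where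
  "eval E \<sigma> (Var i) = \<sigma> i"
| "eval E \<sigma> (App a b) = gmul E (eval E \<sigma> a) (eval E \<sigma> b)"

definition satisfies :: "'v set \<Rightarrow> ('v \<times> 'v) set \<Rightarrow> bterm \<Rightarrow> bterm \<Rightarrow> bool" where
  "satisfies V E t t' \<longleftrightarrow>
     (\<forall>\<sigma>. (\<forall>i x. \<sigma> i = Some x \<longrightarrow> x \<in> V) \<longrightarrow> eval E \<sigma> t = eval E \<sigma> t')"

fun lm :: "bterm \<Rightarrow> nat" where
  "lm (Var i) = i"
| "lm (App a b) = lm a"

fun tedges :: "bterm \<Rightarrow> (nat \<times> nat) set" where
  "tedges (Var i) = {}"
| "tedges (App a b) = tedges a \<union> tedges b \<union> {(lm a, lm b)}"

definition desc :: "bterm \<Rightarrow> nat \<Rightarrow> nat set" where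
  "desc t x = {y. (x, y) \<in> (tedges t)\<^sup>*}"

definition sub_edges :: "bterm \<Rightarrow> nat \<Rightarrow> (nat \<times> nat) set" where
  "sub_edges t x = tedges t \<inter> (desc t x \<times> desc t x)"

definition same_subtree :: "bterm \<Rightarrow> bterm \<Rightarrow> nat \<Rightarrow> bool" where
  "same_subtree t t' x \<longleftrightarrow> desc t x = desc t' x \<and> sub_edges t x = sub_edges t' x"

definition height :: "bterm \<Rightarrow> nat \<Rightarrow> nat" where
  "height t x = Max {k. \<exists>y. (x, y) \<in> (tedges t) ^^ k}"

definition diff_parents :: "bterm \<Rightarrow> bterm \<Rightarrow> nat \<Rightarrow> bool" where
  "diff_parents t t' x \<longleftrightarrow> (\<exists>p p'. (p, x) \<in> tedges t \<and> (p', x) \<in> tedges t' \<and> p \<noteq> p')"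

definition Z_terms :: "bterm \<Rightarrow> bterm \<Rightarrow> nat" where
  "Z_terms t t' = (LEAST m. \<exists>x \<in> set (leaves t).
       same_subtree t t' x \<and> height t x = m \<and> diff_parents t t' x)"

definition is_scc :: "'v set \<Rightarrow> ('v \<times> 'v) set \<Rightarrow> 'v set \<Rightarrow> bool" where
  "is_scc V E S \<longleftrightarrow> S \<subseteq> V \<and> S \<noteq> {} \<and> (\<forall>x\<in>S. \<forall>y\<in>S. (x, y) \<in> E\<^sup>*) \<and>
     (\<forall>T. S \<subseteq> T \<and> T \<subseteq> V \<and> (\<forall>x\<in>T. \<forall>y\<in>T. (x, y) \<in> E\<^sup>*) \<longrightarrow> T = S)"

definition nontrivial_scc :: "('v \<times> 'v) set \<Rightarrow> 'v set \<Rightarrow> bool" where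
  "nontrivial_scc E S \<longleftrightarrow> \<not> (\<exists>x. S = {x} \<and> (x, x) \<notin> E)"

definition whirl_partition :: "'v set \<Rightarrow> ('v \<times> 'v) set \<Rightarrow> nat \<Rightarrow> (nat \<Rightarrow> 'v set) \<Rightarrow> bool" where
  "whirl_partition S E m B \<longleftrightarrow> m \<ge> 1 \<and> (\<forall>i<m. B i \<noteq> {}) \<and> (\<Union>i<m. B i) = S \<and>
     (\<forall>i<m. \<forall>j<m. i \<noteq> j \<longrightarrow> B i \<inter> B j = {}) \<and>
     E \<inter> (S \<times> S) = (\<Union>i<m. B i \<times> B (Suc i mod m))"

definition walk :: "('v \<times> 'v) set \<Rightarrow> 'v \<Rightarrow> (nat \<Rightarrow> 'v) \<Rightarrow> nat \<Rightarrow> bool" where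
  "walk E u v m \<longleftrightarrow> (u, v 0) \<in> E \<and> (\<forall>i<m. (v i, v (Suc i)) \<in> E)"

definition ZG_witness :: "'v set \<Rightarrow> ('v \<times> 'v) set \<Rightarrow> nat \<Rightarrow> bool" where
  "ZG_witness V E m \<longleftrightarrow> (\<exists>S k B i u w v. is_scc V E S \<and> whirl_partition S E k B \<and> i < k \<and>
      u \<in> B i \<and> w \<in> B i \<and> walk E u v m \<and> (w, v 0) \<notin> E)"

text \<open>Z_G: supremum in the extended reals; Sup {} = -\<infinity>, unbounded gives \<infinity>.\<close>
definition Z_G :: "'v set \<Rightarrow> ('v \<times> 'v) set \<Rightarrow> ereal" where
  "Z_G V E = Sup ((\<lambda>m. ereal (real m)) ` {m. ZG_witness V E m})"

end

(* If t and t' differ, some vertex x has the same subtree T_x = T'_x in G(t) and G(t') but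
   different parents p and p': the largest vertex whose parents differ will do, and one exists
   because a term with increasing leaves is determined by its tree. So Z_{t,t'} is attained at
   such an x.

   Given a walk u -> v_0 -> ... -> v_Z with Z = h(T_x) and u in block B_j of a whirl, send
   T_x along the walk by depth and every other vertex y of G(t) into the block
   B_{j + depth y - depth p}, with p going to u and p' to an arbitrary w of its block. This is a homomorphism G(t) -> G, so t
   evaluates to a vertex of A(G); as A(G) satisfies t = t', so does t', and the edge p' -> x of
   G(t') is sent to an edge w -> v_0. Hence if some vertex of B_j has an edge to v_0, then all
   vertices of B_{j+d} do, where d = depth p' - depth p, and k such shifts return to B_j.
   Finally Z_G < Z_{t,t'}, since a witness walk for Z_G of length at least Z_{t,t'} can be
   truncated to length Z_{t,t'}. *)

theory Submission
  imports Defs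
begin

section \<open>The tree of a term with increasing leaves\<close>

abbreviation leaves_increasing :: "bterm \<Rightarrow> bool" where
  "leaves_increasing s \<equiv> sorted_wrt (<) (leaves s)"

lemma Bn_leaves_increasing: "t \<in> Bn n \<Longrightarrow> leaves_increasing t"
  using sorted_wrt_upt[of 1 "Suc n"] by (simp add: Bn_def)

lemma Bn_same_leaves: "t \<in> Bn n \<Longrightarrow> t' \<in> Bn n \<Longrightarrow> leaves t = leaves t'"
  by (simp add: Bn_def)

lemma lm_in_leaves: "lm s \<in> set (leaves s)"
  by (induction s) auto

lemma leaves_not_Nil: "leaves s \<noteq> []"
  by (induction s) auto

lemma hd_leaves: "hd (leaves s) = lm s"
  by (induction s) (auto simp: leaves_not_Nil)

lemma lm_le_leaf: "leaves_increasing s \<Longrightarrow> y \<in> set (leaves s) \<Longrightarrow> lm s \<le> y"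
proof (induction s)
  case (App l r)
  then show ?case using lm_in_leaves[of l] by (force simp: sorted_wrt_append)
qed auto

lemma tedges_in_leaves: "(a, b) \<in> tedges s \<Longrightarrow> a \<in> set (leaves s) \<and> b \<in> set (leaves s)"
  by (induction s) (auto simp: lm_in_leaves)

lemma tedges_less: "leaves_increasing s \<Longrightarrow> (a, b) \<in> tedges s \<Longrightarrow> a < b"
proof (induction s)
  case (App l r)
  then show ?case using lm_in_leaves[of l] lm_in_leaves[of r] by (auto simp: sorted_wrt_append)
qed auto

lemma tedges_target_neq_lm: "leaves_increasing s \<Longrightarrow> (a, b) \<in> tedges s \<Longrightarrow> b \<noteq> lm s"
  using tedges_less tedges_in_leaves lm_le_leaf by fastforce

lemma tedges_parent_exists: "y \<in> set (leaves s) \<Longrightarrow> y \<noteq> lm s \<Longrightarrow> \<exists>a. (a, y) \<in> tedges s"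
  by (induction s) auto

lemma tedges_parent_unique:
  "leaves_increasing s \<Longrightarrow> (a, b) \<in> tedges s \<Longrightarrow> (a', b) \<in> tedges s \<Longrightarrow> a = a'"
proof (induction s)
  case (App l r)
  then have inc: "leaves_increasing l" "leaves_increasing r"
    and disj: "\<And>x. x \<in> set (leaves r) \<Longrightarrow> x \<notin> set (leaves l)"
    by (fastforce simp: sorted_wrt_append)+
  have "b \<in> set (leaves l)" if "(c, b) \<in> tedges l" for c
    using tedges_in_leaves that by blast
  moreover have "b \<in> set (leaves r) \<and> b \<noteq> lm r" if "(c, b) \<in> tedges r" for c
    using tedges_in_leaves tedges_target_neq_lm inc that by blast
  ultimately show ?case
    using App.IH App.prems inc disj lm_in_leaves[of r] by auto
qed auto

lemma rtrancl_tedges_le: "(x, y) \<in> (tedges s)\<^sup>* \<Longrightarrow> leaves_increasing s \<Longrightarrow> x \<le> y"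
  by (induction rule: rtrancl_induct) (auto dest: tedges_less)

fun depth :: "bterm \<Rightarrow> nat \<Rightarrow> nat" where
  "depth (Var i) j = 0"
| "depth (App a b) j = (if j \<in> set (leaves b) then Suc (depth b j) else depth a j)"

lemma depth_lm: "leaves_increasing s \<Longrightarrow> depth s (lm s) = 0"
proof (induction s)
  case (App l r)
  then show ?case using lm_in_leaves[of l] by (force simp: sorted_wrt_append)
qed auto

lemma depth_tedges: "leaves_increasing s \<Longrightarrow> (a, b) \<in> tedges s \<Longrightarrow> depth s b = Suc (depth s a)"
proof (induction s)
  case (App l r)
  then have inc: "leaves_increasing l" "leaves_increasing r"
    and disj: "\<And>x. x \<in> set (leaves l) \<Longrightarrow> x \<notin> set (leaves r)"
    by (fastforce simp: sorted_wrt_append)+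
  show ?case
    using App.IH App.prems(2) inc disj tedges_in_leaves lm_in_leaves[of l] lm_in_leaves[of r]
      depth_lm[OF inc(1)] depth_lm[OF inc(2)]
    by auto
qed auto

lemma rtrancl_tedges_relpow_depth:
  "(x, y) \<in> (tedges s)\<^sup>* \<Longrightarrow> leaves_increasing s \<Longrightarrow>
     depth s x \<le> depth s y \<and> (x, y) \<in> tedges s ^^ (depth s y - depth s x)"
proof (induction rule: rtrancl_induct)
  case (step y z)
  then have "depth s z = Suc (depth s y)" using depth_tedges by blast
  with step show ?case by (auto simp: Suc_diff_le)
qed simp

lemma relpow_tedges_add_le: "leaves_increasing s \<Longrightarrow> (x, y) \<in> tedges s ^^ k \<Longrightarrow> x + k \<le> y"
proof (induction k arbitrary: y)
  case (Suc k)
  then obtain z where "(x, z) \<in> tedges s ^^ k" "(z, y) \<in> tedges s" by auto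
  with Suc show ?case using tedges_less by fastforce
qed simp

lemma height_ge: "leaves_increasing s \<Longrightarrow> (x, y) \<in> tedges s ^^ k \<Longrightarrow> k \<le> height s x"
proof -
  assume inc: "leaves_increasing s" and path: "(x, y) \<in> tedges s ^^ k"
  have "{k. \<exists>y. (x, y) \<in> tedges s ^^ k} \<subseteq> {..Max (insert x (set (leaves s)))}"
  proof
    fix l assume "l \<in> {k. \<exists>y. (x, y) \<in> tedges s ^^ k}"
    then obtain z where z: "(x, z) \<in> tedges s ^^ l" by blast
    then have "z \<in> insert x (set (leaves s))"
      by (metis insertCI relpow_imp_rtrancl rtranclE tedges_in_leaves)
    then have "z \<le> Max (insert x (set (leaves s)))" by simp
    then show "l \<in> {..Max (insert x (set (leaves s)))}"
      using relpow_tedges_add_le[OF inc z] by simp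
  qed
  then have "finite {k. \<exists>y. (x, y) \<in> tedges s ^^ k}" using finite_subset by blast
  then show ?thesis unfolding height_def using path by (blast intro: Max_ge)
qed

lemma desc_depth:
  assumes "leaves_increasing s" and "y \<in> desc s x"
  shows "depth s x \<le> depth s y" and "depth s y - depth s x \<le> height s x"
  using rtrancl_tedges_relpow_depth[of x y s] height_ge[OF assms(1)] assms
  unfolding desc_def by auto

lemma desc_ge: "leaves_increasing s \<Longrightarrow> y \<in> desc s x \<Longrightarrow> x \<le> y"
  unfolding desc_def using rtrancl_tedges_le by blast

lemma desc_tedges_closed: "a \<in> desc s x \<Longrightarrow> (a, b) \<in> tedges s \<Longrightarrow> b \<in> desc s x"
  unfolding desc_def by (simp add: rtrancl_into_rtrancl)

lemma tedges_enter_desc: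
  assumes "leaves_increasing s" "(c, d) \<in> tedges s" "d \<in> desc s x" "c \<notin> desc s x"
  shows "d = x"
proof (rule ccontr)
  assume "d \<noteq> x"
  then obtain c' where "(x, c') \<in> (tedges s)\<^sup>*" "(c', d) \<in> tedges s"
    using assms(3) unfolding desc_def by (metis mem_Collect_eq rtranclE)
  with assms show False unfolding desc_def using tedges_parent_unique by blast
qed

section \<open>Evaluation in A(G)\<close>

definition tree_hom :: "('v \<times> 'v) set \<Rightarrow> (nat \<Rightarrow> 'v) \<Rightarrow> bterm \<Rightarrow> bool" where
  "tree_hom E f s \<longleftrightarrow> (\<forall>(a, b) \<in> tedges s. (f a, f b) \<in> E)"

lemma eval_Some:
  "eval E (\<lambda>i. Some (f i)) s = (if tree_hom E f s then Some (f (lm s)) else None)"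
  by (induction s) (auto simp: tree_hom_def gmul_def)

lemma satisfies_tree_hom:
  assumes "satisfies V E t t'" and "range f \<subseteq> V" and "tree_hom E f t"
  shows "tree_hom E f t'"
proof -
  have "(\<forall>i y. Some (f i) = Some y \<longrightarrow> y \<in> V) \<longrightarrow>
      eval E (\<lambda>i. Some (f i)) t = eval E (\<lambda>i. Some (f i)) t'"
    using assms(1) unfolding satisfies_def by (rule spec)
  moreover have "\<forall>i y. Some (f i) = Some y \<longrightarrow> y \<in> V" using assms(2) by auto
  ultimately have "eval E (\<lambda>i. Some (f i)) t' = eval E (\<lambda>i. Some (f i)) t" by simp
  with assms(3) show ?thesis by (simp add: eval_Some split: if_splits)
qed

section \<open>A vertex with equal subtrees and different parents\<close>

lemma lm_right_eq_Max_children: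
  assumes "leaves_increasing (App a b)"
  shows "lm b = Max {y. (lm a, y) \<in> tedges (App a b)}"
proof (rule sym, rule Max_eqI)
  have disj: "\<And>x y. x \<in> set (leaves a) \<Longrightarrow> y \<in> set (leaves b) \<Longrightarrow> x < y"
    using assms by (auto simp: sorted_wrt_append)
  show "finite {y. (lm a, y) \<in> tedges (App a b)}"
    by (rule finite_subset[of _ "set (leaves (App a b))"]) (use tedges_in_leaves in blast)+
  show "y \<le> lm b" if "y \<in> {y. (lm a, y) \<in> tedges (App a b)}" for y
    using that tedges_in_leaves disj lm_in_leaves[of a] lm_in_leaves[of b]
    by (fastforce simp: less_imp_le)
qed simp

lemma increasing_append_eq_split:
  fixes xs :: "nat list"
  assumes "sorted_wrt (<) (xs @ ys)" "xs @ ys = xs' @ ys'" "ys \<noteq> []" "ys' \<noteq> []" "hd ys = hd ys'"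
  shows "xs = xs'" and "ys = ys'"
proof -
  obtain h zs zs' where ys: "ys = h # zs" and ys': "ys' = h # zs'"
    using assms(3,4,5) by (metis list.collapse)
  have "\<forall>z\<in>set xs. z < h" "\<forall>z\<in>set xs'. z < h"
    using assms(1) assms(1)[unfolded assms(2)] ys ys' by (auto simp: sorted_wrt_append)
  then have "takeWhile (\<lambda>z. z < h) (xs @ ys) = xs" "takeWhile (\<lambda>z. z < h) (xs' @ ys') = xs'"
    using ys ys' by auto
  then show "xs = xs'" using assms(2) by simp
  then show "ys = ys'" using assms(2) by simp
qed

lemma tedges_App_restrict:
  assumes "leaves_increasing (App a b)"
  shows "tedges a = tedges (App a b) \<inter> (set (leaves a) \<times> set (leaves a))"
    and "tedges b = tedges (App a b) \<inter> (set (leaves b) \<times> set (leaves b))"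
proof -
  have disj: "x \<in> set (leaves a) \<Longrightarrow> x \<notin> set (leaves b)" for x
    using assms by (fastforce simp: sorted_wrt_append)
  show "tedges a = tedges (App a b) \<inter> (set (leaves a) \<times> set (leaves a))"
    using tedges_in_leaves[of _ _ a] tedges_in_leaves[of _ _ b] disj lm_in_leaves[of b] by fastforce
  show "tedges b = tedges (App a b) \<inter> (set (leaves b) \<times> set (leaves b))"
    using tedges_in_leaves[of _ _ a] tedges_in_leaves[of _ _ b] disj lm_in_leaves[of a] by fastforce
qed

lemma bterm_eqI_tedges:
  "leaves_increasing s \<Longrightarrow> leaves s = leaves s' \<Longrightarrow> tedges s = tedges s' \<Longrightarrow> s = s'"
proof (induction s arbitrary: s')
  case (Var i)
  then show ?case by (cases s') auto
next
  case (App a b)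
  obtain a' b' where s': "s' = App a' b'" using App.prems(3) by (cases s') auto
  have inc: "leaves_increasing (App a' b')" using App.prems(1,2) s' by simp
  have te: "tedges (App a b) = tedges (App a' b')" using App.prems(3) s' by simp
  have "lm a = lm a'" using App.prems(2) hd_leaves[of "App a b"] hd_leaves[of s'] s' by simp
  then have "hd (leaves b) = hd (leaves b')"
    using lm_right_eq_Max_children[OF App.prems(1)] lm_right_eq_Max_children[OF inc] te
    by (simp only: hd_leaves)
  moreover have "leaves a @ leaves b = leaves a' @ leaves b'" using App.prems(2) s' by simp
  moreover have "sorted_wrt (<) (leaves a @ leaves b)" using App.prems(1) by simp
  ultimately have la: "leaves a = leaves a'" and lb: "leaves b = leaves b'"
    using increasing_append_eq_split[OF _ _ leaves_not_Nil leaves_not_Nil] by blast+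
  have "tedges a = tedges a'"
    using tedges_App_restrict(1)[OF App.prems(1)] tedges_App_restrict(1)[OF inc] te la by simp
  moreover have "tedges b = tedges b'"
    using tedges_App_restrict(2)[OF App.prems(1)] tedges_App_restrict(2)[OF inc] te lb by simp
  moreover have "leaves_increasing a" "leaves_increasing b"
    using App.prems(1) by (auto simp: sorted_wrt_append)
  ultimately show ?case using App.IH la lb s' by simp
qed

lemma diff_parents_commute: "diff_parents t t' x = diff_parents t' t x"
  unfolding diff_parents_def by blast

lemma tedges_transfer:
  assumes "leaves_increasing t" "leaves t = leaves t'" "\<not> diff_parents t t' b" "(a, b) \<in> tedges t"
  shows "(a, b) \<in> tedges t'"
proof -
  have "b \<in> set (leaves t')" using tedges_in_leaves assms(2,4) by metis
  moreover have "b \<noteq> lm t'" using tedges_target_neq_lm assms hd_leaves by metis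
  ultimately obtain a' where "(a', b) \<in> tedges t'" using tedges_parent_exists by blast
  then show ?thesis using assms(3,4) unfolding diff_parents_def by blast
qed

context
  fixes t t' :: bterm and x :: nat
  assumes inc: "leaves_increasing t" and same_leaves: "leaves t = leaves t'"
    and parents_agree: "\<forall>z\<in>set (leaves t). x < z \<longrightarrow> \<not> diff_parents t t' z"
begin

lemma tedges_transfer_above:
  assumes "(a, b) \<in> tedges t" and "x \<le> a"
  shows "(a, b) \<in> tedges t'"
proof -
  have "b \<in> set (leaves t)" and "x < b"
    using assms tedges_in_leaves tedges_less[OF inc] by fastforce+
  then show ?thesis using tedges_transfer[OF inc same_leaves] parents_agree assms(1) by blast
qed

lemma desc_subset_above: "desc t x \<subseteq> desc t' x"
proof
  fix y assume "y \<in> desc t x"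
  then have "(x, y) \<in> (tedges t)\<^sup>*" by (simp add: desc_def)
  then have "(x, y) \<in> (tedges t')\<^sup>*"
  proof (induction rule: rtrancl_induct)
    case (step y z)
    then have "(y, z) \<in> tedges t'" using tedges_transfer_above rtrancl_tedges_le[OF _ inc] by simp
    with step show ?case by (meson rtrancl.rtrancl_into_rtrancl)
  qed simp
  then show "y \<in> desc t' x" by (simp add: desc_def)
qed

lemma sub_edges_subset_above: "sub_edges t x \<subseteq> sub_edges t' x"
proof
  fix e assume "e \<in> sub_edges t x"
  then obtain a b where "e = (a, b)" "(a, b) \<in> tedges t" "a \<in> desc t x" "b \<in> desc t x"
    unfolding sub_edges_def by auto
  then show "e \<in> sub_edges t' x"
    using tedges_transfer_above desc_ge[OF inc] desc_subset_above unfolding sub_edges_def by blast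
qed

end

lemma diff_parents_exists:
  assumes inc: "leaves_increasing t" "leaves_increasing t'"
    and same_leaves: "leaves t = leaves t'" and "t \<noteq> t'"
  shows "\<exists>x\<in>set (leaves t). diff_parents t t' x"
proof (rule ccontr)
  assume none: "\<not> ?thesis"
  then have "tedges t \<subseteq> tedges t'"
    using tedges_transfer[OF inc(1) same_leaves] tedges_in_leaves by fastforce
  moreover have "tedges t' \<subseteq> tedges t"
    using tedges_transfer[OF inc(2) same_leaves[symmetric]] none
      tedges_in_leaves diff_parents_commute same_leaves
    by fastforce
  ultimately show False using bterm_eqI_tedges inc(1) same_leaves \<open>t \<noteq> t'\<close> by blast
qed

lemma same_subtree_diff_parents_exists:
  assumes inc: "leaves_increasing t" "leaves_increasing t'"
    and same_leaves: "leaves t = leaves t'" and "t \<noteq> t'"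
  shows "\<exists>x\<in>set (leaves t). same_subtree t t' x \<and> diff_parents t t' x"
proof -
  define X where "X = {x\<in>set (leaves t). diff_parents t t' x}"
  define x where "x = Max X"
  have "finite X" and "X \<noteq> {}"
    using diff_parents_exists[OF assms] unfolding X_def by auto
  then have "x \<in> X" unfolding x_def by simp
  have above: "\<forall>z\<in>set (leaves t). x < z \<longrightarrow> \<not> diff_parents t t' z"
    using \<open>finite X\<close> x_def X_def Max_ge leD by blast
  then have above': "\<forall>z\<in>set (leaves t'). x < z \<longrightarrow> \<not> diff_parents t' t z"
    using same_leaves diff_parents_commute by metis
  have "same_subtree t t' x"
    unfolding same_subtree_def
    using desc_subset_above[OF inc(1) same_leaves above]
      sub_edges_subset_above[OF inc(1) same_leaves above]
      desc_subset_above[OF inc(2) same_leaves[symmetric] above']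
      sub_edges_subset_above[OF inc(2) same_leaves[symmetric] above']
    by blast
  then show ?thesis using \<open>x \<in> X\<close> unfolding X_def by blast
qed

lemma Z_terms_attained:
  assumes "t \<in> Bn n" "t' \<in> Bn n" "t \<noteq> t'"
  shows "\<exists>x\<in>set (leaves t). same_subtree t t' x \<and> height t x = Z_terms t t' \<and> diff_parents t t' x"
proof -
  obtain x where "x \<in> set (leaves t)" "same_subtree t t' x" "diff_parents t t' x"
    using same_subtree_diff_parents_exists Bn_leaves_increasing Bn_same_leaves assms by blast
  then have "\<exists>m. \<exists>x\<in>set (leaves t). same_subtree t t' x \<and> height t x = m \<and> diff_parents t t' x"
    by blast
  then show ?thesis unfolding Z_terms_def by (rule LeastI_ex)
qed

section \<open>Whirls\<close>

lemma whirl_partition_edge: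
  assumes "whirl_partition S E k B" "j < k" "a \<in> B j" "b \<in> B (Suc j mod k)"
  shows "(a, b) \<in> E"
  using assms unfolding whirl_partition_def by blast

lemma whirl_partition_block_nonempty: "whirl_partition S E k B \<Longrightarrow> j < k \<Longrightarrow> B j \<noteq> {}"
  unfolding whirl_partition_def by blast

lemma whirl_partition_block_subset: "whirl_partition S E k B \<Longrightarrow> j < k \<Longrightarrow> B j \<subseteq> S"
  unfolding whirl_partition_def by blast

lemma walk_in_vertices:
  assumes "E \<subseteq> V \<times> V" and "walk E u v m" and "i \<le> m"
  shows "v i \<in> V"
proof (cases i)
  case 0
  then show ?thesis using assms unfolding walk_def by auto
next
  case (Suc l)
  then have "(v l, v i) \<in> E" using assms(2,3) unfolding walk_def by simp
  then show ?thesis using assms(1) by auto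
qed

lemma is_scc_subset: "is_scc V E S \<Longrightarrow> S \<subseteq> V"
  unfolding is_scc_def by blast

lemma tree_hom_whirl_walk:
  assumes inc: "leaves_increasing t" and wp: "whirl_partition S E k B"
    and walk: "walk E u v (height t x)" and px: "(p, x) \<in> tedges t"
    and fp: "f p = u"
    and f_desc: "\<And>y. y \<in> desc t x \<Longrightarrow> f y = v (depth t y - depth t x)"
    and f_out: "\<And>y. y \<notin> desc t x \<Longrightarrow> f y \<in> B ((c + depth t y) mod k)"
  shows "tree_hom E f t"
  unfolding tree_hom_def
proof safe
  fix a b assume ab: "(a, b) \<in> tedges t"
  have depth_ab: "depth t b = Suc (depth t a)" using depth_tedges[OF inc ab] .
  consider "b \<notin> desc t x" | "a \<in> desc t x" | "b \<in> desc t x" "a \<notin> desc t x" by blast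
  then show "(f a, f b) \<in> E"
  proof cases
    case 1
    then have "a \<notin> desc t x" using ab desc_tedges_closed by blast
    moreover have "(c + depth t b) mod k = Suc ((c + depth t a) mod k) mod k"
      using depth_ab by (simp add: mod_Suc_eq)
    moreover have "(c + depth t a) mod k < k" using wp by (simp add: whirl_partition_def)
    ultimately show ?thesis using whirl_partition_edge[OF wp] f_out 1 by metis
  next
    case 2
    then have "b \<in> desc t x" using ab desc_tedges_closed by blast
    then have "depth t a - depth t x < height t x" and "depth t b - depth t x = Suc (depth t a - depth t x)"
      using desc_depth[OF inc] 2 depth_ab by fastforce+
    then show ?thesis using walk 2 \<open>b \<in> desc t x\<close> f_desc unfolding walk_def by simp
  next
    case 3
    then have "b = x" using tedges_enter_desc[OF inc ab] by blast
    then have "a = p" using tedges_parent_unique[OF inc ab] px by blast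
    then show ?thesis using walk fp f_desc \<open>b = x\<close> unfolding walk_def desc_def by simp
  qed
qed

text \<open>The shift \<open>(k - 1) * depth t p + depth t p'\<close> is \<open>depth t p' - depth t p\<close> modulo \<open>k\<close>,
  written without truncated subtraction.\<close>

lemma whirl_shift_edge:
  assumes inc: "leaves_increasing t" "leaves_increasing t'"
    and sat: "satisfies V E t t'" and EV: "E \<subseteq> V \<times> V"
    and ss: "same_subtree t t' x" and px: "(p, x) \<in> tedges t" and px': "(p', x) \<in> tedges t'"
    and "p \<noteq> p'"
    and wp: "whirl_partition S E k B" and SV: "S \<subseteq> V"
    and "j < k" and u: "u \<in> B j" and w: "w \<in> B ((j + (k - 1) * depth t p + depth t p') mod k)"
    and walk: "walk E u v (height t x)"
  shows "(w, v 0) \<in> E"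
proof -
  define c where "c = j + (k - 1) * depth t p"
  \<comment> \<open>\<open>T\<^sub>x\<close> runs along the walk, the rest of \<open>G(t)\<close> winds around the whirl by depth.\<close>
  define f where "f y = (if y \<in> desc t x then v (depth t y - depth t x)
      else if y = p then u else if y = p' then w else (SOME z. z \<in> B ((c + depth t y) mod k)))" for y
  have "0 < k" using \<open>j < k\<close> by simp
  then have "c + depth t p = j + k * depth t p" unfolding c_def by (cases k) auto
  then have block_p: "(c + depth t p) mod k = j" using \<open>j < k\<close> by simp
  have p_out: "p \<notin> desc t x" using desc_ge[OF inc(1)] tedges_less[OF inc(1) px] by fastforce
  have p'_out: "p' \<notin> desc t x"
    using ss desc_ge[OF inc(2)] tedges_less[OF inc(2) px'] unfolding same_subtree_def by fastforce
  have block_lt: "(c + depth t y) mod k < k" for y using \<open>0 < k\<close> by simp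
  have f_out: "f y \<in> B ((c + depth t y) mod k)" if "y \<notin> desc t x" for y
    using that u w block_p whirl_partition_block_nonempty[OF wp block_lt]
    unfolding f_def c_def by (auto simp: some_in_eq)
  have f_desc: "f y = v (depth t y - depth t x)" if "y \<in> desc t x" for y
    using that unfolding f_def by simp
  have "f y \<in> V" for y
  proof (cases "y \<in> desc t x")
    case True
    then show ?thesis using walk_in_vertices[OF EV walk] desc_depth(2)[OF inc(1) True] f_desc by simp
  next
    case False
    then show ?thesis using f_out whirl_partition_block_subset[OF wp block_lt] SV by blast
  qed
  then have range_f: "range f \<subseteq> V" by blast
  have "f p = u" using p_out unfolding f_def by simp
  then have "tree_hom E f t" using tree_hom_whirl_walk[OF inc(1) wp walk px _ f_desc f_out] by blast
  then have "tree_hom E f t'" by (rule satisfies_tree_hom[OF sat range_f])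
  then have "(f p', f x) \<in> E" using px' unfolding tree_hom_def by blast
  then show ?thesis using p'_out \<open>p \<noteq> p'\<close> unfolding f_def desc_def by simp
qed

lemma cyclic_shift_propagate:
  fixes k D :: nat
  assumes nonempty: "\<forall>j<k. B j \<noteq> {}"
    and shift: "\<And>j u w. j < k \<Longrightarrow> u \<in> B j \<Longrightarrow> P u \<Longrightarrow> w \<in> B ((j + D) mod k) \<Longrightarrow> P w"
    and "i < k" "u \<in> B i" "P u" "w \<in> B i"
  shows "P w"
proof -
  have "\<forall>w\<in>B ((i + Suc m * D) mod k). P w" for m
  proof (induction m)
    case 0
    then show ?case using shift assms(3-5) by simp
  next
    case (Suc m)
    define j where "j = (i + Suc m * D) mod k"
    have "j < k" using \<open>i < k\<close> unfolding j_def by simp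
    then obtain u' where "u' \<in> B j" using nonempty by blast
    moreover have "(j + D) mod k = (i + Suc (Suc m) * D) mod k"
      unfolding j_def by (simp add: mod_add_right_eq algebra_simps)
    ultimately show ?case using shift[OF \<open>j < k\<close>] Suc unfolding j_def by auto
  qed
  from this[of "k - 1"] have "\<forall>w\<in>B ((i + k * D) mod k). P w" using \<open>i < k\<close> by simp
  then show ?thesis using assms(3,6) by simp
qed

lemma whirl_same_block_edge:
  assumes "t \<in> Bn n" "t' \<in> Bn n" "t \<noteq> t'" and EV: "E \<subseteq> V \<times> V" and sat: "satisfies V E t t'"
    and wp: "whirl_partition S E k B" and SV: "S \<subseteq> V"
    and "i < k" "u \<in> B i" "w \<in> B i" and walk: "walk E u v (Z_terms t t')"
  shows "(w, v 0) \<in> E"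
proof -
  have inc: "leaves_increasing t" "leaves_increasing t'"
    using assms(1,2) by (simp_all add: Bn_leaves_increasing)
  obtain x where ss: "same_subtree t t' x" and height: "height t x = Z_terms t t'"
    and "diff_parents t t' x"
    using Z_terms_attained[OF assms(1-3)] by blast
  then obtain p p' where px: "(p, x) \<in> tedges t" and px': "(p', x) \<in> tedges t'" and "p \<noteq> p'"
    unfolding diff_parents_def by blast
  show ?thesis
  proof (rule cyclic_shift_propagate[where P = "\<lambda>u. (u, v 0) \<in> E"])
    show "\<forall>j<k. B j \<noteq> {}" using whirl_partition_block_nonempty[OF wp] by blast
    show "(u, v 0) \<in> E" using walk unfolding walk_def by simp
    show "(w', v 0) \<in> E"
      if "j < k" "u' \<in> B j" "(u', v 0) \<in> E" "w' \<in> B ((j + ((k - 1) * depth t p + depth t p')) mod k)"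
      for j u' w'
      using whirl_shift_edge[OF inc sat EV ss px px' \<open>p \<noteq> p'\<close> wp SV that(1,2)] that(3,4) walk height
      unfolding walk_def by (simp add: add.assoc)
  qed fact+
qed

lemma Sup_ereal_of_nat_less:
  assumes "\<And>m. m \<in> M \<Longrightarrow> m < Z"
  shows "Sup ((\<lambda>m. ereal (real m)) ` M) < ereal (real Z)"
proof (cases "M = {}")
  case True
  then show ?thesis by (simp add: bot_ereal_def)
next
  case False
  then have "1 \<le> Z" using assms by fastforce
  have "Sup ((\<lambda>m. ereal (real m)) ` M) \<le> ereal (real (Z - 1))"
    using assms by (intro Sup_least) (force simp: of_nat_diff)
  also have "\<dots> < ereal (real Z)" using \<open>1 \<le> Z\<close> by simp
  finally show ?thesis .
qed

theorem lemma6p16: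
  fixes n :: nat and t t' :: bterm and V :: "'v set" and E :: "('v \<times> 'v) set"
  assumes "t \<in> Bn n" and "t' \<in> Bn n" and "t \<noteq> t'"
    and "E \<subseteq> V \<times> V"
    and "satisfies V E t t'"
  shows "(\<forall>S k B i u w v. is_scc V E S \<and> nontrivial_scc E S \<and> whirl_partition S E k B \<and>
            i < k \<and> u \<in> B i \<and> w \<in> B i \<and> walk E u v (Z_terms t t') \<longrightarrow> (w, v 0) \<in> E)
         \<and> Z_G V E < ereal (real (Z_terms t t'))"
proof (intro conjI allI impI, elim conjE)
  fix S k B i u w v
  assume "is_scc V E S" "whirl_partition S E k B" "i < k" "u \<in> B i" "w \<in> B i"
    "walk E u v (Z_terms t t')"
  then show "(w, v 0) \<in> E" using whirl_same_block_edge[OF assms] is_scc_subset by blast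
next
  have witness_less: "m < Z_terms t t'" if witness: "ZG_witness V E m" for m
  proof (rule ccontr)
    assume "\<not> m < Z_terms t t'"
    obtain S k B i u w v where "is_scc V E S" "whirl_partition S E k B" "i < k"
      "u \<in> B i" "w \<in> B i" "walk E u v m" "(w, v 0) \<notin> E"
      using witness unfolding ZG_witness_def by blast
    moreover from \<open>walk E u v m\<close> \<open>\<not> m < Z_terms t t'\<close> have "walk E u v (Z_terms t t')"
      unfolding walk_def by simp
    ultimately show False using whirl_same_block_edge[OF assms] is_scc_subset by blast
  qed
  show "Z_G V E < ereal (real (Z_terms t t'))"
    unfolding Z_G_def by (rule Sup_ereal_of_nat_less) (simp add: witness_less)
qed

end
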